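(* Let $\Gamma$ be the semigroup associated to an irreducible plane curve singularity, minimally generated by $r_0<\cdots<r_h$, with $h\ge 2$. Then $r_h\ge \frac13\left(5\cdot 2^{2h-1}-1\right)$.
   Context: A numerical semigroup is a submonoid of $(\mathbb N,+)$ with finite complement in $\mathbb N$; it has a unique minimal generating system. $\langle X\rangle$ is the submonoid generated by $X$. For an arrangement $(r_0,\ldots,r_h)$ of the minimal generators, set $d_k=\gcd(r_0,\ldots,r_{k-1})$ ($k=1,\ldots,h+1$) and $e_k=d_k/d_{k+1}$ ($k=1,\ldots,h$). A set $A$ of positive integers with nontrivial partition $A=A_1\cup A_2$ is the gluing of $A_1$ and $A_2$ if $\mathrm{lcm}(\gcd A_1,\gcd A_2)\in\langle A_1\rangle\cap\langle A_2\rangle$. $\Gamma$ is free for $(r_0,\ldots,r_h)$ if $h=0$, or $h\ge1$, $\{r_0,\ldots,r_h\}$ is the gluing of $\{r_0,\ldots,r_{h-1}\}$ and $\{r_h\}$, and $\langle r_0/d_h,\ldots,r_{h-1}/d_h\rangle$ is free for $(r_0/d_h,\ldots,r_{h-1}/d_h)$. $\Gamma$ is telescopic if it is free for the increasing arrangement $r_0<\cdots<r_h$. $\Gamma$ is the semigroup associated to an irreducible plane curve singularity if it is telescopic and $e_kr_k<r_{k+1}$ for all $k=1,\ldots,h-1$. *)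

theory Defs
  imports Main
begin

inductive_set gen :: "nat set \<Rightarrow> nat set" for X :: "nat set" where
  gen_zero: "0 \<in> gen X"
| gen_base: "x \<in> X \<Longrightarrow> x \<in> gen X"
| gen_add: "a \<in> gen X \<Longrightarrow> b \<in> gen X \<Longrightarrow> a + b \<in> gen X"

definition numerical_semigroup :: "nat set \<Rightarrow> bool" where
  "numerical_semigroup S \<longleftrightarrow> 0 \<in> S \<and> (\<forall>a\<in>S. \<forall>b\<in>S. a + b \<in> S) \<and> finite (UNIV - S)"

definition minimal_generating_system :: "nat set \<Rightarrow> nat set \<Rightarrow> bool" where
  "minimal_generating_system S X \<longleftrightarrow> gen X = S \<and> (\<forall>Y. Y \<subset> X \<longrightarrow> gen Y \<noteq> S)"

definition gluing :: "nat set \<Rightarrow> nat set \<Rightarrow> bool" where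
  "gluing A1 A2 \<longleftrightarrow> A1 \<noteq> {} \<and> A2 \<noteq> {} \<and> A1 \<inter> A2 = {} \<and>
     lcm (Gcd A1) (Gcd A2) \<in> gen A1 \<inter> gen A2"

text \<open>Freeness for an arrangement, on the reversed list (last generator first).\<close>
function freeR :: "nat list \<Rightarrow> bool" where
  "freeR [] = True"
| "freeR [x] = True"
| "freeR (y # x # xs) =
     (gluing (set (x # xs)) {y} \<and>
      freeR (map (\<lambda>z. z div Gcd (set (x # xs))) (x # xs)))"
  by pat_completeness auto
termination by (relation "measure length") auto

definition free_for :: "nat list \<Rightarrow> bool" where
  "free_for rs \<longleftrightarrow> freeR (rev rs)"

definition dseq :: "nat list \<Rightarrow> nat \<Rightarrow> nat" where
  "dseq rs k = Gcd (set (take k rs))"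

definition eseq :: "nat list \<Rightarrow> nat \<Rightarrow> nat" where
  "eseq rs k = dseq rs k div dseq rs (Suc k)"

end

theory Submission
  imports Defs
begin

text \<open>Write d_k for the gcd of r_0, ..., r_(k-1). Freeness puts lcm(d_k, r_k) into the
semigroup generated by r_0, ..., r_(k-1), so minimality forbids d_k | r_k. Hence
d_(k+1) = gcd(d_k, r_k) is a proper divisor of d_k, i.e. e_k \<ge> 2, and as d_(h+1) = 1 we get
d_(k+1) \<ge> 2^(h-k). Since d_2 divides r_0 < r_1, r_1 \<ge> r_0 + d_2 \<ge> 3 d_2 \<ge> 3 * 2^(h-1);
likewise d_(k+2) divides r_k and r_(k+1) > e_k r_k \<ge> 2 r_k, so r_(k+1) \<ge> 2 r_k + 2^(h-k-1).
This recurrence preserves 3 r_k + 2^(h-k) \<ge> 5 * 2^(h+k-1), which for k = h is the claim.\<close>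

lemma gen_subset: "X \<subseteq> gen Y \<Longrightarrow> gen X \<subseteq> gen Y"
proof
  fix m assume "X \<subseteq> gen Y" and "m \<in> gen X"
  from \<open>m \<in> gen X\<close> show "m \<in> gen Y"
    by (induction m rule: gen.induct) (use \<open>X \<subseteq> gen Y\<close> in \<open>auto intro: gen.intros\<close>)
qed

lemma gen_mono: "X \<subseteq> Y \<Longrightarrow> gen X \<subseteq> gen Y"
  by (rule gen_subset) (auto intro: gen.gen_base)

lemma Gcd_dvd_gen: "m \<in> gen X \<Longrightarrow> Gcd X dvd m"
  by (induction m rule: gen.induct) auto

lemma mult_mem_gen_if_mem_gen_div:
  assumes "\<forall>a\<in>A. (g::nat) dvd a" and "m \<in> gen ((\<lambda>a. a div g) ` A)"
  shows "g * m \<in> gen A"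
  using assms(2)
proof (induction m rule: gen.induct)
  case (gen_base x)
  then show ?case using assms(1) by (auto intro: gen.gen_base)
qed (auto simp: distrib_left intro: gen.gen_zero gen.gen_add)

lemma Gcd_image_div:
  assumes "\<forall>a\<in>A. (g::nat) dvd a"
  shows "g * Gcd ((\<lambda>a. a div g) ` A) = Gcd A"
proof -
  have "(*) g ` (\<lambda>a. a div g) ` A = A"
    using assms by (force simp: image_image)
  then show ?thesis using Gcd_mult[of g "(\<lambda>a. a div g) ` A"] by simp
qed

lemma free_for_lcm_mem_gen:
  assumes "free_for rs" and "1 \<le> k" and "k < length rs"
  shows "lcm (dseq rs k) (rs ! k) \<in> gen (set (take k rs))"
  using assms
proof (induction "length rs" arbitrary: rs k rule: less_induct)
  case less
  obtain ys y where rs: "rs = ys @ [y]"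
    using less.prems(3) by (metis length_0_conv less_zeroE rev_exhaust)
  then obtain x zs where rev_ys: "rev ys = x # zs"
    using less.prems(2,3) by (cases "rev ys") auto
  define g where "g = Gcd (set ys)"
  \<comment> \<open>the prefix is free only after division by g; its gluing conditions scale back by g\<close>
  have "set (x # zs) = set ys"
    by (metis rev_ys set_rev)
  moreover have "freeR (y # x # zs)"
    using less.prems(1) by (simp add: free_for_def rs rev_ys)
  ultimately have glue: "gluing (set ys) {y}"
    and free_div: "free_for (map (\<lambda>z. z div g) ys)"
    by (simp_all only: freeR.simps free_for_def g_def rev_map rev_ys)
  show ?case
  proof (cases "k = length ys")
    case True
    then show ?thesis using glue by (simp add: rs gluing_def dseq_def)
  next
    case False
    then have k: "k < length ys" using less.prems(3) rs by simp
    define T where "T = set (take k ys)"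
    have g_dvd: "\<forall>a\<in>T. g dvd a" by (auto simp: T_def g_def dest: in_set_takeD)
    have "lcm (dseq (map (\<lambda>z. z div g) ys) k) (ys ! k div g)
            \<in> gen ((\<lambda>a. a div g) ` T)"
      using less.hyps[OF _ free_div less.prems(2)] k rs by (simp add: T_def take_map)
    then have "g * lcm (Gcd ((\<lambda>a. a div g) ` T)) (ys ! k div g) \<in> gen T"
      using mult_mem_gen_if_mem_gen_div[OF g_dvd] by (simp add: dseq_def T_def take_map)
    moreover have "g * (ys ! k div g) = ys ! k"
      using k by (simp add: g_def)
    ultimately have "lcm (Gcd T) (ys ! k) \<in> gen T"
      using lcm_mult_left[of g "Gcd ((\<lambda>a. a div g) ` T)" "ys ! k div g"]
      by (simp add: Gcd_image_div[OF g_dvd])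
    then show ?thesis using k by (simp add: rs T_def dseq_def nth_append)
  qed
qed

lemma minimal_generating_system_not_mem_gen_Diff:
  assumes "minimal_generating_system S X" and "x \<in> X"
  shows "x \<notin> gen (X - {x})"
proof
  assume "x \<in> gen (X - {x})"
  then have "X \<subseteq> gen (X - {x})"
    by (auto intro: gen.gen_base)
  then have "gen (X - {x}) = gen X"
    by (meson Diff_subset gen_mono gen_subset subset_antisym)
  moreover have "X - {x} \<subset> X"
    using \<open>x \<in> X\<close> by blast
  ultimately show False
    using assms(1) by (auto simp: minimal_generating_system_def)
qed

lemma minimal_generating_system_zero_notin:
  "minimal_generating_system S X \<Longrightarrow> 0 \<notin> X"
  by (metis minimal_generating_system_not_mem_gen_Diff gen.gen_zero)

lemma numerical_semigroup_Gcd_generators: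
  assumes "numerical_semigroup S" and "gen X = S"
  shows "Gcd X = 1"
proof -
  obtain n where "\<forall>m \<in> UNIV - S. m \<le> n"
    using assms(1) by (auto simp: numerical_semigroup_def finite_nat_set_iff_bounded_le)
  then have "Suc n \<in> S" and "Suc (Suc n) \<in> S"
    by force+
  then have "Gcd X dvd Suc n" and "Gcd X dvd Suc (Suc n)"
    using Gcd_dvd_gen assms(2) by blast+
  then have "Gcd X dvd 1"
    by (metis add_diff_cancel_right' dvd_diff_nat plus_1_eq_Suc)
  then show ?thesis
    by simp
qed

lemma dseq_dvd_nth: "i < k \<Longrightarrow> i < length rs \<Longrightarrow> dseq rs k dvd rs ! i"
  using nth_mem[of i "take k rs"] by (simp add: dseq_def)

lemma dseq_dvd_dseq: "k \<le> l \<Longrightarrow> dseq rs l dvd dseq rs k"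
  unfolding dseq_def by (rule Gcd_greatest) (meson Gcd_dvd set_take_subset_set_take subsetD)

lemma dseq_one: "rs \<noteq> [] \<Longrightarrow> dseq rs 1 = rs ! 0"
  by (cases rs) (simp_all add: dseq_def)

lemma dseq_pos:
  assumes "0 \<notin> set rs" and "rs \<noteq> []" and "1 \<le> k"
  shows "0 < dseq rs k"
proof -
  have "rs ! 0 \<noteq> 0"
    using assms(1,2) by (metis length_greater_0_conv nth_mem)
  moreover have "dseq rs k dvd rs ! 0"
    using assms(2,3) by (auto intro: dseq_dvd_nth)
  ultimately show ?thesis
    by (auto intro: gr0I)
qed

lemma double_le_if_proper_dvd:
  assumes "(b::nat) dvd a" and "b \<noteq> a" and "0 < a"
  shows "2 * b \<le> a"
proof -
  obtain q where q: "a = b * q"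
    using assms(1) by blast
  then have "q \<noteq> 0" and "q \<noteq> 1"
    using assms(2,3) by auto
  then have "2 \<le> q"
    by linarith
  then show ?thesis
    using q by simp
qed

lemma add_le_if_dvd_less:
  assumes "(a::nat) dvd b" and "a dvd c" and "c < b"
  shows "c + a \<le> b"
proof -
  have "a dvd b - c" and "0 < b - c"
    using assms by (simp_all add: dvd_diff_nat)
  then have "a \<le> b - c"
    by (rule dvd_imp_le)
  then show ?thesis
    using assms(3) by linarith
qed

context
  fixes rs :: "nat list" and k :: nat
  assumes zero_notin: "0 \<notin> set rs"
    and k: "1 \<le> k" "k < length rs"
    and not_dvd: "\<not> dseq rs k dvd rs ! k"
begin

lemma dseq_Suc_double_le: "2 * dseq rs (Suc k) \<le> dseq rs k"
proof (rule double_le_if_proper_dvd)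
  show "dseq rs (Suc k) dvd dseq rs k"
    by (simp add: dseq_dvd_dseq)
  show "dseq rs (Suc k) \<noteq> dseq rs k"
    using not_dvd dseq_dvd_nth[of k "Suc k" rs] k by auto
  show "0 < dseq rs k"
    using dseq_pos[OF zero_notin] k by fastforce
qed

lemma eseq_ge_2: "2 \<le> eseq rs k"
proof -
  have "0 < dseq rs (Suc k)"
    using k by (intro dseq_pos[OF zero_notin]) auto
  then show ?thesis
    using div_le_mono[OF dseq_Suc_double_le, of "dseq rs (Suc k)"] by (simp add: eseq_def)
qed

end

lemma dseq_power_lower_bound:
  assumes "0 \<notin> set rs"
    and "\<And>k. 1 \<le> k \<Longrightarrow> k < length rs \<Longrightarrow> \<not> dseq rs k dvd rs ! k"
    and "j < length rs"
  shows "2 ^ j * Gcd (set rs) \<le> dseq rs (length rs - j)"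
  using assms(3)
proof (induction j)
  case 0
  then show ?case
    by (simp add: dseq_def)
next
  case (Suc j)
  define m where "m = length rs - Suc j"
  have "1 \<le> m" "m < length rs" and Suc_m: "Suc m = length rs - j"
    using Suc.prems by (auto simp: m_def)
  then have "2 * dseq rs (length rs - j) \<le> dseq rs m"
    using dseq_Suc_double_le[OF assms(1) _ _ assms(2)] by metis
  then show ?case
    using Suc by (simp add: m_def)
qed

lemma free_for_minimal_not_dvd:
  assumes "minimal_generating_system S (set rs)" and "distinct rs" and "free_for rs"
    and "1 \<le> k" and "k < length rs"
  shows "\<not> dseq rs k dvd rs ! k"
proof
  assume "dseq rs k dvd rs ! k"
  then have "rs ! k \<in> gen (set (take k rs))"
    using free_for_lcm_mem_gen[OF assms(3-5)] by (simp add: lcm_proj2_if_dvd)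
  moreover have "rs ! k \<in> set (drop k rs)"
    using nth_mem[of 0 "drop k rs"] assms(5) by simp
  then have "set (take k rs) \<subseteq> set rs - {rs ! k}"
    using set_take_disj_set_drop_if_distinct[OF assms(2), of k k] set_take_subset[of k rs]
    by auto
  ultimately have "rs ! k \<in> gen (set rs - {rs ! k})"
    by (meson gen_mono subsetD)
  then show False
    using minimal_generating_system_not_mem_gen_Diff[OF assms(1)] assms(5) by simp
qed

lemma second_generator_lower_bound:
  assumes "sorted_wrt (<) rs" and "1 < length rs"
    and "0 \<notin> set rs" and "\<not> dseq rs 1 dvd rs ! 1"
  shows "3 * dseq rs 2 \<le> rs ! 1"
proof -
  have "dseq rs 1 = rs ! 0"
    using assms(2) by (intro dseq_one) auto
  then have "2 * dseq rs 2 \<le> rs ! 0"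
    using dseq_Suc_double_le[OF assms(3) _ assms(2,4)] by (simp add: numeral_2_eq_2)
  moreover have "rs ! 0 + dseq rs 2 \<le> rs ! 1"
    using assms(1,2) by (intro add_le_if_dvd_less dseq_dvd_nth) (auto simp: sorted_wrt_iff_nth_less)
  ultimately show ?thesis
    by simp
qed

lemma generator_step_lower_bound:
  assumes "Suc k < length rs" and "2 \<le> eseq rs k" and "eseq rs k * rs ! k < rs ! Suc k"
  shows "2 * rs ! k + dseq rs (Suc (Suc k)) \<le> rs ! Suc k"
proof (rule add_le_if_dvd_less)
  show "2 * rs ! k < rs ! Suc k"
    using assms(2,3) mult_le_mono1[OF assms(2), of "rs ! k"] by linarith
qed (use assms(1) in \<open>simp_all add: dseq_dvd_nth\<close>)

lemma doubling_recurrence_lower_bound: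
  fixes r :: "nat \<Rightarrow> nat"
  assumes "1 \<le> h" and "3 * 2 ^ (h - 1) \<le> r 1"
    and "\<And>k. 1 \<le> k \<Longrightarrow> k < h \<Longrightarrow> 2 * r k + 2 ^ (h - Suc k) \<le> r (Suc k)"
    and "1 \<le> k" and "k \<le> h"
  shows "5 * 2 ^ (h + k - 1) \<le> 3 * r k + 2 ^ (h - k)"
  using assms(4,5)
proof (induction k rule: nat_induct_at_least)
  case base
  have "2 ^ h = 2 * (2::nat) ^ (h - 1)"
    using assms(1) by (metis Suc_diff_le diff_Suc_1 power_Suc)
  then show ?case
    using assms(2) by simp
next
  case (Suc k)
  have "2 ^ (h - k) = 2 * (2::nat) ^ (h - Suc k)"
    and "2 ^ (h + Suc k - 1) = 2 * (2::nat) ^ (h + k - 1)"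
    using Suc by (simp_all flip: power_Suc add: Suc_diff_Suc)
  then show ?case
    using Suc assms(3)[of k] by simp
qed

theorem proposition5p1:
  fixes S :: "nat set" and rs :: "nat list" and h :: nat
  assumes "numerical_semigroup S"
    and "minimal_generating_system S (set rs)"
    and "sorted_wrt (<) rs"
    and "length rs = h + 1"
    and "h \<ge> 2"
    and "free_for rs"
    and "\<forall>k. 1 \<le> k \<and> k \<le> h - 1 \<longrightarrow> eseq rs k * rs ! k < rs ! (k + 1)"
  shows "3 * rs ! h + 1 \<ge> 5 * 2 ^ (2 * h - 1)"
proof -
  have zero_notin: "0 \<notin> set rs"
    using assms(2) by (rule minimal_generating_system_zero_notin)
  have Gcd_1: "Gcd (set rs) = 1"
    using assms(1,2) numerical_semigroup_Gcd_generators minimal_generating_system_def by blast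
  have not_dvd: "\<not> dseq rs k dvd rs ! k" if "1 \<le> k" "k < length rs" for k
    using free_for_minimal_not_dvd[OF assms(2) _ assms(6) that] assms(3) strict_sorted_iff by blast
  have dseq_bound: "2 ^ (h - k) \<le> dseq rs (Suc k)" if "k \<le> h" for k
    using dseq_power_lower_bound[OF zero_notin not_dvd, of "h - k"] that assms(4) Gcd_1
    by (simp add: Suc_diff_le)
  have "3 * 2 ^ (h - 1) \<le> rs ! 1"
    using second_generator_lower_bound[OF assms(3) _ zero_notin not_dvd] dseq_bound[of 1] assms(4,5)
    by (simp add: numeral_2_eq_2)
  moreover have "2 * rs ! k + 2 ^ (h - Suc k) \<le> rs ! Suc k" if "1 \<le> k" "k < h" for k
    using generator_step_lower_bound[of k rs] eseq_ge_2[OF zero_notin _ _ not_dvd, of k]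
      assms(4,7) dseq_bound[of "Suc k"] that by fastforce
  ultimately have "5 * 2 ^ (h + h - 1) \<le> 3 * rs ! h + 2 ^ (h - h)"
    using doubling_recurrence_lower_bound[of h "(!) rs" h] assms(5) by simp
  then show ?thesis
    by (simp add: mult_2)
qed

end
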